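(* Let $(L,\rho,\tau)$ be a probabilistic metric space whose triangle function $\tau$ is sup-continuous and satisfies condition (W). Then the subfamily $P_{fb}(L)$ of nonempty closed bounded subsets and the subfamily $P_{ftb}(L)$ of nonempty closed totally bounded subsets are closed in $P_f(L)$ with respect to the probabilistic Pompeiu–Hausdorff metric $H$ (i.e. if $A_n\to A$ in $(P_f(L),H)$ with all $A_n$ in the subfamily, then $A$ is in the subfamily). Consequently, if $L$ is complete, then $P_{fb}(L)$ and the family $P_k(L)$ of nonempty compact subsets of $L$ are complete with respect to $H$.
   Context: $\Delta^+$ is the set of functions $F:[-\infty,\infty]\to[0,1]$ that are nondecreasing, left-continuous on $\mathbb R$, with $F(-\infty)=0$, $F(\infty)=1$ and $F(0)=0$; ordered pointwise. $\epsilon_0(x)=0$ for $x\le0$, $=1$ for $x>0$. Infimum of $\{F_i\}$ in $\Delta^+$: $G(x)=\sup_{x'<x}\inf_iF_i(x')$; supremum: pointwise. A triangle function is $\tau:\Delta^+\times\Delta^+\to\Delta^+$ commutative, associative, nondecreasing in each argument, with $\tau(F,\epsilon_0)=F$, continuous for weak convergence. A probabilistic metric space $(L,\rho,\tau)$: set $L$, continuous triangle function $\tau$, $\rho:L\times L\to\Delta^+$, $\rho(p,q)=F_{pq}$, with $F_{pp}=\epsilon_0$, $F_{pq}=\epsilon_0\Rightarrow p=q$, $F_{pq}=F_{qp}$, $F_{pr}\ge\tau(F_{pq},F_{qr})$. Strong topology: neighborhood base $U_t(p)=\{q:F_{pq}(t)>1-t\}$; it comes from the uniformity with vicinities $U_t=\{(p,q):F_{pq}(t)>1-t\}$,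 $t>0$; convergence, Cauchy sequences, completeness, compactness refer to it. A set $Y\subset L$ is totally bounded if for every $t>0$ there is a finite $Z\subset L$ with $Y\subset\bigcup_{z\in Z}U_t(z)$. A set $A$ is bounded if $\sup_{t>0}\Phi_A(t)=1$ where $\Phi_A(t)=\inf\{F_{pp'}(t):p,p'\in A\}$. $\tau$ is sup-continuous if $\tau(\sup_iF_i,G)=\sup_i\tau(F_i,G)$ for every family $\{F_i\}\subset\Delta^+$, $G\in\Delta^+$. Condition (W): for all $x>0$, $F,G\in\Delta^+$, $\alpha,\beta\in\mathbb R$, $F(x)>\alpha$ and $G(x)>\beta$ imply $\tau(F,G)(x)>\alpha+\beta-1$. For nonempty $A,B\subset L$: $F_{pB}(x)=\sup_{q\in B}F_{pq}(x)$, $\Gamma^*_{AB}(x)=\inf_{p\in A}F_{pB}(x)$, $F^*_{AB}(x)=\sup_{x'<x}\Gamma^*_{AB}(x')$, $H(A,B)=F_{AB}=\min\{F^*_{AB},F^*_{BA}\}$. $P_f(L)$ is the family of nonempty closed subsets; $A_n\to A$ in $(P_f(L),H)$ iff for every $t>0$, $F_{A_nA}(t)>1-t$ for all large $n$; Cauchy sequences for $H$ analogously. *)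

theory Defs
  imports Complex_Main
begin

text \<open>Distribution functions of Delta+ are represented by their restriction to the
real line (the values F(-inf)=0 and F(inf)=1 are fixed by convention).\<close>

definition delta_plus :: "(real \<Rightarrow> real) \<Rightarrow> bool" where
  "delta_plus F \<longleftrightarrow> mono F \<and> (\<forall>x. 0 \<le> F x \<and> F x \<le> 1) \<and> F 0 = 0
     \<and> (\<forall>x. (F \<longlongrightarrow> F x) (at_left x))"

definition eps0 :: "real \<Rightarrow> real" where
  "eps0 = (\<lambda>x. if x \<le> 0 then 0 else 1)"

definition weak_conv :: "(nat \<Rightarrow> real \<Rightarrow> real) \<Rightarrow> (real \<Rightarrow> real) \<Rightarrow> bool" where
  "weak_conv Fs F \<longleftrightarrow> (\<forall>x. isCont F x \<longrightarrow> (\<lambda>n. Fs n x) \<longlonglongrightarrow> F x)"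

definition triangle_function ::
  "((real \<Rightarrow> real) \<Rightarrow> (real \<Rightarrow> real) \<Rightarrow> (real \<Rightarrow> real)) \<Rightarrow> bool" where
  "triangle_function \<tau> \<longleftrightarrow>
     (\<forall>F G. delta_plus F \<and> delta_plus G \<longrightarrow> delta_plus (\<tau> F G)) \<and>
     (\<forall>F G. delta_plus F \<and> delta_plus G \<longrightarrow> \<tau> F G = \<tau> G F) \<and>
     (\<forall>F G K. delta_plus F \<and> delta_plus G \<and> delta_plus K \<longrightarrow> \<tau> F (\<tau> G K) = \<tau> (\<tau> F G) K) \<and>
     (\<forall>F F' G. delta_plus F \<and> delta_plus F' \<and> delta_plus G \<and> F \<le> F' \<longrightarrow> \<tau> F G \<le> \<tau> F' G) \<and>
     (\<forall>F. delta_plus F \<longrightarrow> \<tau> F eps0 = F) \<and>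
     (\<forall>Fs F Gs G. (\<forall>n. delta_plus (Fs n)) \<and> delta_plus F \<and> (\<forall>n. delta_plus (Gs n)) \<and> delta_plus G
        \<and> weak_conv Fs F \<and> weak_conv Gs G \<longrightarrow> weak_conv (\<lambda>n. \<tau> (Fs n) (Gs n)) (\<tau> F G))"

definition tf_sup_continuous ::
  "((real \<Rightarrow> real) \<Rightarrow> (real \<Rightarrow> real) \<Rightarrow> (real \<Rightarrow> real)) \<Rightarrow> bool" where
  "tf_sup_continuous \<tau> \<longleftrightarrow>
     (\<forall>S G. S \<noteq> {} \<and> (\<forall>F\<in>S. delta_plus F) \<and> delta_plus G \<longrightarrow>
        \<tau> (\<lambda>x. SUP F\<in>S. F x) G = (\<lambda>x. SUP F\<in>S. \<tau> F G x))"

definition condition_W ::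
  "((real \<Rightarrow> real) \<Rightarrow> (real \<Rightarrow> real) \<Rightarrow> (real \<Rightarrow> real)) \<Rightarrow> bool" where
  "condition_W \<tau> \<longleftrightarrow>
     (\<forall>x F G \<alpha> \<beta>. x > 0 \<and> delta_plus F \<and> delta_plus G \<and> F x > \<alpha> \<and> G x > \<beta>
        \<longrightarrow> \<tau> F G x > \<alpha> + \<beta> - 1)"

definition pm_space ::
  "('a \<Rightarrow> 'a \<Rightarrow> real \<Rightarrow> real) \<Rightarrow> ((real \<Rightarrow> real) \<Rightarrow> (real \<Rightarrow> real) \<Rightarrow> (real \<Rightarrow> real)) \<Rightarrow> bool" where
  "pm_space \<rho> \<tau> \<longleftrightarrow> triangle_function \<tau> \<and>
     (\<forall>p q. delta_plus (\<rho> p q)) \<and>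
     (\<forall>p. \<rho> p p = eps0) \<and>
     (\<forall>p q. \<rho> p q = eps0 \<longrightarrow> p = q) \<and>
     (\<forall>p q. \<rho> p q = \<rho> q p) \<and>
     (\<forall>p q r. \<tau> (\<rho> p q) (\<rho> q r) \<le> \<rho> p r)"

definition nbhd :: "('a \<Rightarrow> 'a \<Rightarrow> real \<Rightarrow> real) \<Rightarrow> real \<Rightarrow> 'a \<Rightarrow> 'a set" where
  "nbhd \<rho> t p = {q. \<rho> p q t > 1 - t}"

definition pm_open :: "('a \<Rightarrow> 'a \<Rightarrow> real \<Rightarrow> real) \<Rightarrow> 'a set \<Rightarrow> bool" where
  "pm_open \<rho> S \<longleftrightarrow> (\<forall>p\<in>S. \<exists>t>0. nbhd \<rho> t p \<subseteq> S)"

definition pm_closed :: "('a \<Rightarrow> 'a \<Rightarrow> real \<Rightarrow> real) \<Rightarrow> 'a set \<Rightarrow> bool" where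
  "pm_closed \<rho> A \<longleftrightarrow> pm_open \<rho> (- A)"

definition pm_compact :: "('a \<Rightarrow> 'a \<Rightarrow> real \<Rightarrow> real) \<Rightarrow> 'a set \<Rightarrow> bool" where
  "pm_compact \<rho> K \<longleftrightarrow> (\<forall>\<U>. (\<forall>U\<in>\<U>. pm_open \<rho> U) \<and> K \<subseteq> \<Union>\<U> \<longrightarrow>
      (\<exists>\<V>\<subseteq>\<U>. finite \<V> \<and> K \<subseteq> \<Union>\<V>))"

definition pm_converges :: "('a \<Rightarrow> 'a \<Rightarrow> real \<Rightarrow> real) \<Rightarrow> (nat \<Rightarrow> 'a) \<Rightarrow> 'a \<Rightarrow> bool" where
  "pm_converges \<rho> xs p \<longleftrightarrow> (\<forall>t>0. \<exists>N. \<forall>n\<ge>N. \<rho> p (xs n) t > 1 - t)"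

definition pm_cauchy :: "('a \<Rightarrow> 'a \<Rightarrow> real \<Rightarrow> real) \<Rightarrow> (nat \<Rightarrow> 'a) \<Rightarrow> bool" where
  "pm_cauchy \<rho> xs \<longleftrightarrow> (\<forall>t>0. \<exists>N. \<forall>m\<ge>N. \<forall>n\<ge>N. \<rho> (xs m) (xs n) t > 1 - t)"

definition pm_complete :: "('a \<Rightarrow> 'a \<Rightarrow> real \<Rightarrow> real) \<Rightarrow> bool" where
  "pm_complete \<rho> \<longleftrightarrow> (\<forall>xs. pm_cauchy \<rho> xs \<longrightarrow> (\<exists>p. pm_converges \<rho> xs p))"

definition pm_totally_bounded :: "('a \<Rightarrow> 'a \<Rightarrow> real \<Rightarrow> real) \<Rightarrow> 'a set \<Rightarrow> bool" where
  "pm_totally_bounded \<rho> Y \<longleftrightarrow> (\<forall>t>0. \<exists>Z. finite Z \<and> Y \<subseteq> (\<Union>z\<in>Z. nbhd \<rho> t z))"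

definition Phi :: "('a \<Rightarrow> 'a \<Rightarrow> real \<Rightarrow> real) \<Rightarrow> 'a set \<Rightarrow> real \<Rightarrow> real" where
  "Phi \<rho> A t = (INF pp'\<in>A \<times> A. \<rho> (fst pp') (snd pp') t)"

definition pm_bounded :: "('a \<Rightarrow> 'a \<Rightarrow> real \<Rightarrow> real) \<Rightarrow> 'a set \<Rightarrow> bool" where
  "pm_bounded \<rho> A \<longleftrightarrow> (SUP t\<in>{0<..}. Phi \<rho> A t) = 1"

definition F_pt_set :: "('a \<Rightarrow> 'a \<Rightarrow> real \<Rightarrow> real) \<Rightarrow> 'a \<Rightarrow> 'a set \<Rightarrow> real \<Rightarrow> real" where
  "F_pt_set \<rho> p B x = (SUP q\<in>B. \<rho> p q x)"

definition Gamma_star :: "('a \<Rightarrow> 'a \<Rightarrow> real \<Rightarrow> real) \<Rightarrow> 'a set \<Rightarrow> 'a set \<Rightarrow> real \<Rightarrow> real" where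
  "Gamma_star \<rho> A B x = (INF p\<in>A. F_pt_set \<rho> p B x)"

definition F_star :: "('a \<Rightarrow> 'a \<Rightarrow> real \<Rightarrow> real) \<Rightarrow> 'a set \<Rightarrow> 'a set \<Rightarrow> real \<Rightarrow> real" where
  "F_star \<rho> A B x = (SUP x'\<in>{..<x}. Gamma_star \<rho> A B x')"

definition pm_H :: "('a \<Rightarrow> 'a \<Rightarrow> real \<Rightarrow> real) \<Rightarrow> 'a set \<Rightarrow> 'a set \<Rightarrow> real \<Rightarrow> real" where
  "pm_H \<rho> A B x = min (F_star \<rho> A B x) (F_star \<rho> B A x)"

definition Pf :: "('a \<Rightarrow> 'a \<Rightarrow> real \<Rightarrow> real) \<Rightarrow> 'a set set" where
  "Pf \<rho> = {A. A \<noteq> {} \<and> pm_closed \<rho> A}"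

definition Pfb :: "('a \<Rightarrow> 'a \<Rightarrow> real \<Rightarrow> real) \<Rightarrow> 'a set set" where
  "Pfb \<rho> = {A. A \<noteq> {} \<and> pm_closed \<rho> A \<and> pm_bounded \<rho> A}"

definition Pftb :: "('a \<Rightarrow> 'a \<Rightarrow> real \<Rightarrow> real) \<Rightarrow> 'a set set" where
  "Pftb \<rho> = {A. A \<noteq> {} \<and> pm_closed \<rho> A \<and> pm_totally_bounded \<rho> A}"

definition Pk :: "('a \<Rightarrow> 'a \<Rightarrow> real \<Rightarrow> real) \<Rightarrow> 'a set set" where
  "Pk \<rho> = {A. A \<noteq> {} \<and> pm_compact \<rho> A}"

definition H_converges :: "('a \<Rightarrow> 'a \<Rightarrow> real \<Rightarrow> real) \<Rightarrow> (nat \<Rightarrow> 'a set) \<Rightarrow> 'a set \<Rightarrow> bool" where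
  "H_converges \<rho> As A \<longleftrightarrow> (\<forall>t>0. \<exists>N. \<forall>n\<ge>N. pm_H \<rho> (As n) A t > 1 - t)"

definition H_cauchy :: "('a \<Rightarrow> 'a \<Rightarrow> real \<Rightarrow> real) \<Rightarrow> (nat \<Rightarrow> 'a set) \<Rightarrow> bool" where
  "H_cauchy \<rho> As \<longleftrightarrow> (\<forall>t>0. \<exists>N. \<forall>m\<ge>N. \<forall>n\<ge>N. pm_H \<rho> (As m) (As n) t > 1 - t)"

definition H_closed_in_Pf :: "('a \<Rightarrow> 'a \<Rightarrow> real \<Rightarrow> real) \<Rightarrow> 'a set set \<Rightarrow> bool" where
  "H_closed_in_Pf \<rho> \<F> \<longleftrightarrow> (\<forall>As A. (\<forall>n. As n \<in> \<F>) \<and> A \<in> Pf \<rho> \<and> H_converges \<rho> As A \<longrightarrow> A \<in> \<F>)"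

definition H_complete :: "('a \<Rightarrow> 'a \<Rightarrow> real \<Rightarrow> real) \<Rightarrow> 'a set set \<Rightarrow> bool" where
  "H_complete \<rho> \<F> \<longleftrightarrow> (\<forall>As. (\<forall>n. As n \<in> \<F>) \<and> H_cauchy \<rho> As \<longrightarrow> (\<exists>A\<in>\<F>. H_converges \<rho> As A))"

end

(*
  Condition (W) gives the Lukasiewicz form F_pr(x) >= F_pq(x) + F_qr(x) - 1 of the triangle
  inequality.  Hence d(p,q) = inf {t > 0. F_pq(t) > 1 - t} is a metric whose balls are squeezed
  between the neighbourhoods U_t, so the strong topology, total boundedness, compactness and
  completeness are those of d, and H-convergence is Hausdorff convergence for d.  Boundedness and
  total boundedness pass to H-limits by the Lukasiewicz inequality; an H-Cauchy sequence of closed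
  sets converges to its lower Kuratowski limit, whose points are reached by geometric chains; and
  in a complete space the compact sets are exactly the closed totally bounded ones.
*)

theory Submission
  imports Defs "HOL-Analysis.Analysis"
begin

lemma ex_divide_power2_less:
  fixes c \<epsilon> :: real
  assumes "0 < \<epsilon>"
  shows "\<exists>N. c / 2^N < \<epsilon>"
proof -
  obtain N where "c / \<epsilon> < 2^N" using real_arch_pow[of 2] by auto
  then show ?thesis using assms by (auto simp: divide_less_eq mult.commute)
qed

definition hausdorff_near :: "('a \<Rightarrow> 'a \<Rightarrow> real) \<Rightarrow> 'a set \<Rightarrow> 'a set \<Rightarrow> real \<Rightarrow> bool" where
  "hausdorff_near d A B e \<longleftrightarrow> (\<forall>p\<in>A. \<exists>q\<in>B. d p q < e) \<and> (\<forall>q\<in>B. \<exists>p\<in>A. d q p < e)"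

definition hausdorff_cauchy :: "('a \<Rightarrow> 'a \<Rightarrow> real) \<Rightarrow> (nat \<Rightarrow> 'a set) \<Rightarrow> bool" where
  "hausdorff_cauchy d As \<longleftrightarrow> (\<forall>e>0. \<exists>N. \<forall>m\<ge>N. \<forall>n\<ge>N. hausdorff_near d (As m) (As n) e)"

definition hausdorff_tendsto :: "('a \<Rightarrow> 'a \<Rightarrow> real) \<Rightarrow> (nat \<Rightarrow> 'a set) \<Rightarrow> 'a set \<Rightarrow> bool" where
  "hausdorff_tendsto d As A \<longleftrightarrow> (\<forall>e>0. \<exists>N. \<forall>n\<ge>N. hausdorff_near d (As n) A e)"

context Metric_space
begin

lemma mdist_geometric_chain:
  assumes xs: "\<And>k. xs k \<in> M" and step: "\<And>k. d (xs k) (xs (Suc k)) < c / 2^k"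
  shows "d (xs k) (xs (k + j)) \<le> 2*c/2^k - 2*c/2^(k + j)"
proof (induction j)
  case 0
  then show ?case using xs by simp
next
  case (Suc j)
  have "d (xs k) (xs (k + Suc j)) \<le> d (xs k) (xs (k + j)) + d (xs (k + j)) (xs (Suc (k + j)))"
    using xs triangle by simp
  also have "\<dots> < 2*c/2^k - 2*c/2^(k + j) + c/2^(k + j)"
    using Suc.IH step[of "k + j"] by linarith
  also have "\<dots> = 2*c/2^k - 2*c/2^(k + Suc j)"
    by (simp add: field_simps)
  finally show ?case by simp
qed

lemma mdist_geometric_tail:
  assumes xs: "\<And>k. xs k \<in> M" and step: "\<And>k. d (xs k) (xs (Suc k)) < c / 2^k" and "k \<le> m"
  shows "d (xs k) (xs m) \<le> 2*c/2^k"
proof -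
  obtain j where m: "m = k + j" using \<open>k \<le> m\<close> le_Suc_ex by blast
  have "0 < c" using order_le_less_trans[OF nonneg step[of 0]] by simp
  then have "0 \<le> 2*c/2^(k + j)" by simp
  then show ?thesis using mdist_geometric_chain[OF xs step, of k j] unfolding m by linarith
qed

lemma MCauchy_geometric:
  assumes xs: "\<And>k. xs k \<in> M" and step: "\<And>k. d (xs k) (xs (Suc k)) < c / 2^k"
  shows "MCauchy xs"
  unfolding MCauchy_def
proof (intro conjI allI impI)
  fix \<epsilon> :: real assume "0 < \<epsilon>"
  then obtain N where N: "4*c/2^N < \<epsilon>" using ex_divide_power2_less by blast
  have "d (xs m) (xs n) < \<epsilon>" if "N \<le> m" "N \<le> n" for m n
  proof -
    have "d (xs m) (xs n) \<le> d (xs N) (xs m) + d (xs N) (xs n)"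
      using xs triangle'' by blast
    also have "\<dots> \<le> 2*c/2^N + 2*c/2^N"
      using mdist_geometric_tail[OF xs step, of N] that by (meson add_mono)
    also have "\<dots> = 4*c/2^N"
      by simp
    finally show ?thesis using N by linarith
  qed
  then show "\<exists>N. \<forall>m n. N \<le> m \<longrightarrow> N \<le> n \<longrightarrow> d (xs m) (xs n) < \<epsilon>" by blast
qed (use xs in auto)

lemma mdist_limit_geometric:
  assumes xs: "\<And>k. xs k \<in> M" and step: "\<And>k. d (xs k) (xs (Suc k)) < c / 2^k"
    and lim: "limitin mtopology xs p sequentially"
  shows "d (xs k) p \<le> 2*c/2^k"
proof -
  have "\<forall>\<^sub>F m in sequentially. xs m \<in> mcball (xs k) (2*c/2^k)"
    using mdist_geometric_tail[OF xs step] xs by (auto simp: eventually_sequentially)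
  then have "p \<in> mcball (xs k) (2*c/2^k)"
    using limitin_closedin[OF lim closedin_mcball] xs limitin_mspace[OF lim] by simp
  then show ?thesis by simp
qed

definition lower_limit :: "(nat \<Rightarrow> 'a set) \<Rightarrow> 'a set" where
  "lower_limit As = {p \<in> M. \<forall>e>0. \<exists>N. \<forall>n\<ge>N. \<exists>q\<in>As n. d p q < e}"

lemma lower_limitD:
  "p \<in> lower_limit As \<Longrightarrow> 0 < e \<Longrightarrow> \<exists>N. \<forall>n\<ge>N. \<exists>q\<in>As n. d p q < e"
  unfolding lower_limit_def by blast

lemma closedin_lower_limit:
  assumes As: "\<And>n. As n \<subseteq> M"
  shows "closedin mtopology (lower_limit As)"
  unfolding closedin_metric
proof (intro conjI allI impI)
  fix x assume x: "x \<in> M - lower_limit As"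
  then obtain e where "0 < e" and e: "\<forall>N. \<exists>n\<ge>N. \<forall>q\<in>As n. \<not> d x q < e"
    unfolding lower_limit_def by blast
  have "y \<notin> lower_limit As" if y: "y \<in> mball x (e/2)" for y
  proof
    assume "y \<in> lower_limit As"
    moreover have "0 < e/2" using \<open>0 < e\<close> by simp
    ultimately obtain N where N: "\<forall>n\<ge>N. \<exists>q\<in>As n. d y q < e/2"
      using lower_limitD by blast
    obtain n where n: "N \<le> n" "\<forall>q\<in>As n. \<not> d x q < e" using e by blast
    then obtain q where q: "q \<in> As n" "d y q < e/2" using N by blast
    have "y \<in> M" "d x y < e/2" using y by auto
    moreover have "q \<in> M" using q(1) As by blast
    ultimately have "d x q < e" using x q(2) triangle[of x y q] by force
    then show False using n(2) q(1) by blast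
  qed
  then have "disjnt (lower_limit As) (mball x (e/2))" by (auto simp: disjnt_iff)
  then show "\<exists>r>0. disjnt (lower_limit As) (mball x r)" using \<open>0 < e\<close> half_gt_zero by blast
qed (auto simp: lower_limit_def)

lemma lower_limit_approx:
  assumes As: "\<And>n. As n \<subseteq> M" and cauchy: "hausdorff_cauchy d As" and "0 < e"
  shows "\<exists>N. \<forall>n\<ge>N. \<forall>p\<in>lower_limit As. \<exists>q\<in>As n. d p q < e"
proof -
  obtain N where N: "\<forall>m\<ge>N. \<forall>n\<ge>N. hausdorff_near d (As m) (As n) (e/2)"
    using cauchy \<open>0 < e\<close> unfolding hausdorff_cauchy_def by (meson half_gt_zero)
  have "\<exists>q\<in>As n. d p q < e" if n: "N \<le> n" and p: "p \<in> lower_limit As" for n p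
  proof -
    have "0 < e/2" using \<open>0 < e\<close> by simp
    then obtain N' where N': "\<forall>m\<ge>N'. \<exists>q\<in>As m. d p q < e/2"
      using lower_limitD[OF p] by blast
    have "N' \<le> max N N'" by simp
    then obtain q where q: "q \<in> As (max N N')" "d p q < e/2" using N' by blast
    moreover have "hausdorff_near d (As (max N N')) (As n) (e/2)" using N n by simp
    ultimately obtain q' where q': "q' \<in> As n" "d q q' < e/2"
      unfolding hausdorff_near_def by blast
    have "p \<in> M" "q \<in> M" "q' \<in> M" using p q(1) q'(1) As by (auto simp: lower_limit_def)
    then have "d p q' \<le> d p q + d q q'" by (rule triangle)
    then show ?thesis using q q' by (intro bexI[of _ q']) auto
  qed
  then show ?thesis by blast
qed

lemma hausdorff_geometric_chain:
  fixes Nf :: "nat \<Rightarrow> nat"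
  assumes Nf: "\<And>k m n. Nf k \<le> m \<Longrightarrow> Nf k \<le> n \<Longrightarrow> hausdorff_near d (As m) (As n) (c/2^k)"
    and "Nf 0 \<le> n" "x \<in> As n"
  shows "\<exists>xs idx. xs 0 = x \<and>
    (\<forall>k. Nf k \<le> idx k \<and> xs k \<in> As (idx k) \<and> d (xs k) (xs (Suc k)) < c/2^k)"
proof -
  define idx where "idx k = (if k = 0 then n else Nf k + Nf (k - 1))" for k
  have idx: "Nf k \<le> idx k" "Nf k \<le> idx (Suc k)" for k
    using \<open>Nf 0 \<le> n\<close> by (auto simp: idx_def)
  have "\<exists>xs. \<forall>k. (xs k \<in> As (idx k) \<and> (k = 0 \<longrightarrow> xs k = x)) \<and> d (xs k) (xs (Suc k)) < c/2^k"
  proof (rule dependent_nat_choice)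
    show "\<exists>y. y \<in> As (idx 0) \<and> (0 = 0 \<longrightarrow> y = x)" using assms(3) by (simp add: idx_def)
  next
    fix y k assume "y \<in> As (idx k) \<and> (k = 0 \<longrightarrow> y = x)"
    moreover have "hausdorff_near d (As (idx k)) (As (idx (Suc k))) (c/2^k)"
      using Nf idx by blast
    ultimately obtain y' where "y' \<in> As (idx (Suc k))" "d y y' < c/2^k"
      unfolding hausdorff_near_def by blast
    then show "\<exists>y'. (y' \<in> As (idx (Suc k)) \<and> (Suc k = 0 \<longrightarrow> y' = x)) \<and> d y y' < c/2^k"
      by blast
  qed
  then show ?thesis using idx(1) by blast
qed

lemma approx_by_lower_limit:
  assumes complete: "mcomplete" and As: "\<And>n. As n \<subseteq> M"
    and cauchy: "hausdorff_cauchy d As" and "0 < e"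
  shows "\<exists>N. \<forall>n\<ge>N. \<forall>x\<in>As n. \<exists>p\<in>lower_limit As. d x p < e"
proof -
  define c where "c = e/4"
  have "\<forall>k. \<exists>N. \<forall>m\<ge>N. \<forall>n\<ge>N. hausdorff_near d (As m) (As n) (c/2^k)"
    using cauchy \<open>0 < e\<close> by (simp add: hausdorff_cauchy_def c_def)
  then obtain Nf where Nf: "\<And>k m n. Nf k \<le> m \<Longrightarrow> Nf k \<le> n \<Longrightarrow> hausdorff_near d (As m) (As n) (c/2^k)"
    by metis
  have "\<exists>p\<in>lower_limit As. d x p < e" if x: "Nf 0 \<le> n" "x \<in> As n" for n x
  proof -
    obtain xs idx where xs: "xs 0 = x" "\<And>k. Nf k \<le> idx k" "\<And>k. xs k \<in> As (idx k)"
      and step: "\<And>k. d (xs k) (xs (Suc k)) < c/2^k"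
      using hausdorff_geometric_chain[where Nf = Nf and As = As and c = c, OF Nf x] by blast
    have xsM: "xs k \<in> M" for k using xs(3) As by blast
    obtain p where p: "limitin mtopology xs p sequentially"
      using complete MCauchy_geometric[OF xsM step] by (auto simp: mcomplete_def)
    note dist_p = mdist_limit_geometric[OF xsM step p]
    have "\<exists>N. \<forall>m\<ge>N. \<exists>q\<in>As m. d p q < \<delta>" if "0 < \<delta>" for \<delta>
    proof -
      obtain k where k: "3*c/2^k < \<delta>" using ex_divide_power2_less \<open>0 < \<delta>\<close> by blast
      have "\<exists>q\<in>As m. d p q < \<delta>" if m: "Nf k \<le> m" for m
      proof -
        have "hausdorff_near d (As (idx k)) (As m) (c/2^k)" using Nf[OF xs(2) m] .
        then obtain q where q: "q \<in> As m" "d (xs k) q < c/2^k"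
          using xs(3)[of k] unfolding hausdorff_near_def by blast
        have "q \<in> M" using q(1) As by blast
        then have "d p q \<le> d (xs k) p + d (xs k) q"
          using triangle''[OF limitin_mspace[OF p] xsM[of k]] by simp
        then show ?thesis using dist_p[of k] q k by (intro bexI[of _ q]) auto
      qed
      then show ?thesis by blast
    qed
    then have "p \<in> lower_limit As" using limitin_mspace[OF p] by (simp add: lower_limit_def)
    moreover have "d x p < e" using dist_p[of 0] xs(1) \<open>0 < e\<close> by (simp add: c_def)
    ultimately show ?thesis by blast
  qed
  then show ?thesis by blast
qed

lemma mcomplete_hausdorff_limit:
  assumes complete: "mcomplete" and As: "\<And>n. As n \<subseteq> M" "\<And>n. As n \<noteq> {}"
    and cauchy: "hausdorff_cauchy d As"
  shows "\<exists>A. A \<noteq> {} \<and> closedin mtopology A \<and> hausdorff_tendsto d As A"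
proof (intro exI conjI)
  obtain N where "\<forall>n\<ge>N. \<forall>x\<in>As n. \<exists>p\<in>lower_limit As. d x p < 1"
    using approx_by_lower_limit[OF complete As(1) cauchy, of 1] by auto
  then show "lower_limit As \<noteq> {}" using As(2)[of N] by blast
  show "closedin mtopology (lower_limit As)" using closedin_lower_limit[OF As(1)] .
  show "hausdorff_tendsto d As (lower_limit As)"
    unfolding hausdorff_tendsto_def
  proof (intro allI impI)
    fix e :: real assume "0 < e"
    obtain N1 where "\<forall>n\<ge>N1. \<forall>x\<in>As n. \<exists>p\<in>lower_limit As. d x p < e"
      using approx_by_lower_limit[OF complete As(1) cauchy \<open>0 < e\<close>] by blast
    moreover obtain N2 where "\<forall>n\<ge>N2. \<forall>p\<in>lower_limit As. \<exists>q\<in>As n. d p q < e"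
      using lower_limit_approx[OF As(1) cauchy \<open>0 < e\<close>] by blast
    ultimately have "\<forall>n\<ge>max N1 N2. hausdorff_near d (As n) (lower_limit As) e"
      by (auto simp: hausdorff_near_def)
    then show "\<exists>N. \<forall>n\<ge>N. hausdorff_near d (As n) (lower_limit As) e" by blast
  qed
qed

end

locale pm_space_W =
  fixes \<rho> :: "'a \<Rightarrow> 'a \<Rightarrow> real \<Rightarrow> real"
    and \<tau> :: "(real \<Rightarrow> real) \<Rightarrow> (real \<Rightarrow> real) \<Rightarrow> (real \<Rightarrow> real)"
  assumes pm_space: "pm_space \<rho> \<tau>" and condition_W: "condition_W \<tau>"
begin

lemma delta_plus_rho: "delta_plus (\<rho> p q)"
  using pm_space by (simp add: pm_space_def)

lemma rho_mono: "x \<le> y \<Longrightarrow> \<rho> p q x \<le> \<rho> p q y"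
  using delta_plus_rho[of p q] by (simp add: delta_plus_def mono_def)

lemma rho_nonneg: "0 \<le> \<rho> p q x"
  using delta_plus_rho[of p q] by (simp add: delta_plus_def)

lemma rho_le_one: "\<rho> p q x \<le> 1"
  using delta_plus_rho[of p q] by (simp add: delta_plus_def)

lemma rho_commute: "\<rho> p q = \<rho> q p"
  using pm_space by (simp add: pm_space_def)

lemma rho_refl: "\<rho> p p = eps0"
  using pm_space by (simp add: pm_space_def)

lemma rho_nonpos: "x \<le> 0 \<Longrightarrow> \<rho> p q x = 0"
  using delta_plus_rho[of p q] rho_mono[of x 0 p q] rho_nonneg[of p q x]
  by (simp add: delta_plus_def)

lemma rho_eq_eps0_imp: "\<rho> p q = eps0 \<Longrightarrow> p = q"
  using pm_space by (simp add: pm_space_def)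

lemma rho_triangle_W:
  assumes "0 < x"
  shows "\<rho> p q x + \<rho> q r x - 1 \<le> \<rho> p r x"
proof (rule ccontr)
  assume neg: "\<not> ?thesis"
  define \<delta> where "\<delta> = (\<rho> p q x + \<rho> q r x - 1 - \<rho> p r x) / 2"
  have "0 < \<delta>" using neg by (simp add: \<delta>_def)
  then have "\<tau> (\<rho> p q) (\<rho> q r) x > (\<rho> p q x - \<delta>) + (\<rho> q r x - \<delta>) - 1"
    using condition_W assms delta_plus_rho unfolding condition_W_def
    by (metis diff_less_eq less_add_same_cancel1)
  moreover have "\<tau> (\<rho> p q) (\<rho> q r) x \<le> \<rho> p r x"
    using pm_space by (simp add: pm_space_def le_fun_def)
  ultimately show False by (simp add: \<delta>_def)
qed

definition pm_dist :: "'a \<Rightarrow> 'a \<Rightarrow> real" where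
  "pm_dist p q = Inf {t. 0 < t \<and> 1 - t < \<rho> p q t}"

lemma pm_dist_less_imp:
  assumes "pm_dist p q < t"
  shows "1 - t < \<rho> p q t"
proof -
  have "(2::real) \<in> {t. 0 < t \<and> 1 - t < \<rho> p q t}" using rho_nonneg[of p q 2] by simp
  then obtain s where "0 < s" "1 - s < \<rho> p q s" "s < t"
    using cInf_lessD[OF _ assms[unfolded pm_dist_def]] by blast
  then show ?thesis using rho_mono[of s t p q] by linarith
qed

lemma pm_dist_le: "0 < t \<Longrightarrow> 1 - t < \<rho> p q t \<Longrightarrow> pm_dist p q \<le> t"
  unfolding pm_dist_def by (rule cInf_lower) (auto intro: bdd_belowI[of _ 0])

lemma pm_dist_nonneg: "0 \<le> pm_dist p q"
proof -
  have "(2::real) \<in> {t. 0 < t \<and> 1 - t < \<rho> p q t}" using rho_nonneg[of p q 2] by simp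
  then have "{t. 0 < t \<and> 1 - t < \<rho> p q t} \<noteq> {}" by blast
  then show ?thesis unfolding pm_dist_def by (rule cInf_greatest) simp
qed

lemma pm_dist_commute: "pm_dist p q = pm_dist q p"
  unfolding pm_dist_def by (metis rho_commute)

lemma pm_dist_self: "pm_dist p p = 0"
proof (rule ccontr)
  assume "pm_dist p p \<noteq> 0"
  then have "0 < pm_dist p p" using pm_dist_nonneg[of p p] by simp
  then have "pm_dist p p \<le> pm_dist p p / 2"
    by (intro pm_dist_le) (auto simp: rho_refl eps0_def)
  then show False using \<open>0 < pm_dist p p\<close> by simp
qed

lemma pm_dist_triangle: "pm_dist p r \<le> pm_dist p q + pm_dist q r"
proof (rule field_le_epsilon)
  fix e :: real assume "0 < e"
  define a where "a = pm_dist p q + e/2"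
  define b where "b = pm_dist q r + e/2"
  have "0 < a" "0 < b"
    using pm_dist_nonneg[of p q] pm_dist_nonneg[of q r] \<open>0 < e\<close> by (auto simp: a_def b_def)
  have "1 - a < \<rho> p q a" "1 - b < \<rho> q r b"
    using \<open>0 < e\<close> by (auto intro!: pm_dist_less_imp simp: a_def b_def)
  moreover have "\<rho> p q a \<le> \<rho> p q (a + b)" "\<rho> q r b \<le> \<rho> q r (a + b)"
    using \<open>0 < a\<close> \<open>0 < b\<close> by (auto intro: rho_mono)
  moreover have "\<rho> p q (a + b) + \<rho> q r (a + b) - 1 \<le> \<rho> p r (a + b)"
    using \<open>0 < a\<close> \<open>0 < b\<close> by (intro rho_triangle_W) auto
  ultimately have "1 - (a + b) < \<rho> p r (a + b)" by linarith
  then have "pm_dist p r \<le> a + b" using \<open>0 < a\<close> \<open>0 < b\<close> by (intro pm_dist_le) auto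
  then show "pm_dist p r \<le> pm_dist p q + pm_dist q r + e" by (simp add: a_def b_def)
qed

lemma pm_dist_eq_0_imp:
  assumes "pm_dist p q = 0"
  shows "p = q"
proof (rule rho_eq_eps0_imp, rule ext)
  fix x
  show "\<rho> p q x = eps0 x"
  proof (cases "x \<le> 0")
    case True
    then show ?thesis by (simp add: rho_nonpos eps0_def)
  next
    case False
    have "1 \<le> \<rho> p q x"
    proof (rule field_le_epsilon)
      fix e :: real assume "0 < e"
      define t where "t = min (x/2) e"
      have "0 < t" using False \<open>0 < e\<close> by (simp add: t_def)
      then have "1 - t < \<rho> p q t" using pm_dist_less_imp assms by simp
      moreover have "\<rho> p q t \<le> \<rho> p q x" using False by (intro rho_mono) (simp add: t_def)
      ultimately show "1 \<le> \<rho> p q x + e" by (simp add: t_def)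
    qed
    then show ?thesis using rho_le_one[of p q x] False by (simp add: eps0_def)
  qed
qed

sublocale D: Metric_space UNIV pm_dist
  by unfold_locales
    (auto simp: pm_dist_nonneg pm_dist_commute pm_dist_self pm_dist_triangle intro: pm_dist_eq_0_imp)

lemma mball_subset_nbhd: "D.mball p t \<subseteq> nbhd \<rho> t p"
  using pm_dist_less_imp by (auto simp: nbhd_def)

lemma pm_dist_le_if_nbhd: "0 < t \<Longrightarrow> q \<in> nbhd \<rho> t p \<Longrightarrow> pm_dist p q \<le> t"
  using pm_dist_le by (auto simp: nbhd_def)

lemma pm_open_iff_openin: "pm_open \<rho> U \<longleftrightarrow> openin D.mtopology U"
proof
  assume U: "pm_open \<rho> U"
  show "openin D.mtopology U" unfolding D.openin_mtopology
  proof (intro conjI allI impI)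
    fix x assume "x \<in> U"
    then obtain t where "0 < t" "nbhd \<rho> t x \<subseteq> U" using U by (auto simp: pm_open_def)
    then show "\<exists>r>0. D.mball x r \<subseteq> U" using mball_subset_nbhd by blast
  qed simp
next
  assume U: "openin D.mtopology U"
  show "pm_open \<rho> U" unfolding pm_open_def
  proof
    fix x assume "x \<in> U"
    then obtain r where "0 < r" "D.mball x r \<subseteq> U" using U by (auto simp: D.openin_mtopology)
    moreover have "nbhd \<rho> (r/2) x \<subseteq> D.mball x r"
      using pm_dist_le_if_nbhd[of "r/2"] \<open>0 < r\<close> by force
    ultimately show "\<exists>t>0. nbhd \<rho> t x \<subseteq> U" by (intro exI[of _ "r/2"]) auto
  qed
qed

lemma pm_closed_iff_closedin: "pm_closed \<rho> A \<longleftrightarrow> closedin D.mtopology A"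
  by (simp add: pm_closed_def pm_open_iff_openin closedin_def Compl_eq_Diff_UNIV)

lemma pm_compact_iff_compactin: "pm_compact \<rho> K \<longleftrightarrow> compactin D.mtopology K"
proof -
  have "compactin D.mtopology K \<longleftrightarrow> (\<forall>\<U>. (\<forall>U\<in>\<U>. openin D.mtopology U) \<and> K \<subseteq> \<Union>\<U> \<longrightarrow>
      (\<exists>\<V>. finite \<V> \<and> \<V> \<subseteq> \<U> \<and> K \<subseteq> \<Union>\<V>))"
    unfolding compactin_def by simp
  then show ?thesis
    unfolding pm_compact_def pm_open_iff_openin by (metis (no_types, lifting))
qed

lemma pm_totally_bounded_iff: "pm_totally_bounded \<rho> S \<longleftrightarrow> D.mtotally_bounded S"
proof
  assume S: "pm_totally_bounded \<rho> S"
  show "D.mtotally_bounded S" unfolding D.mtotally_bounded_def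
  proof (intro allI impI)
    fix e :: real assume "0 < e"
    define t where "t = e/3"
    have "0 < t" using \<open>0 < e\<close> by (simp add: t_def)
    then obtain Z where Z: "finite Z" "S \<subseteq> (\<Union>z\<in>Z. nbhd \<rho> t z)"
      using S unfolding pm_totally_bounded_def by blast
    define Z' where "Z' = {z\<in>Z. S \<inter> nbhd \<rho> t z \<noteq> {}}"
    define f where "f z = (SOME x. x \<in> S \<inter> nbhd \<rho> t z)" for z
    have f: "f z \<in> S \<inter> nbhd \<rho> t z" if "z \<in> Z'" for z
    proof -
      have "\<exists>x. x \<in> S \<inter> nbhd \<rho> t z" using that unfolding Z'_def by blast
      then show ?thesis unfolding f_def by (rule someI_ex)
    qed
    have "S \<subseteq> (\<Union>x\<in>f ` Z'. D.mball x e)"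
    proof
      fix x assume "x \<in> S"
      then obtain z where z: "z \<in> Z" "x \<in> nbhd \<rho> t z" using Z by blast
      then have "z \<in> Z'" using \<open>x \<in> S\<close> unfolding Z'_def by blast
      have "pm_dist z x \<le> t" "pm_dist z (f z) \<le> t"
        using pm_dist_le_if_nbhd[OF \<open>0 < t\<close>] z(2) f[OF \<open>z \<in> Z'\<close>] by auto
      then have "pm_dist (f z) x < e"
        using pm_dist_triangle[of "f z" x z] pm_dist_commute[of z "f z"] \<open>0 < e\<close>
        unfolding t_def by linarith
      then show "x \<in> (\<Union>x\<in>f ` Z'. D.mball x e)" using \<open>z \<in> Z'\<close> by auto
    qed
    moreover have "finite (f ` Z')" using Z(1) by (simp add: Z'_def)
    moreover have "f ` Z' \<subseteq> S" using f by blast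
    ultimately show "\<exists>K. finite K \<and> K \<subseteq> S \<and> S \<subseteq> (\<Union>x\<in>K. D.mball x e)" by blast
  qed
next
  assume S: "D.mtotally_bounded S"
  show "pm_totally_bounded \<rho> S" unfolding pm_totally_bounded_def
  proof (intro allI impI)
    fix t :: real assume "0 < t"
    then obtain K where "finite K" "S \<subseteq> (\<Union>x\<in>K. D.mball x t)"
      using S unfolding D.mtotally_bounded_def by blast
    moreover have "(\<Union>x\<in>K. D.mball x t) \<subseteq> (\<Union>z\<in>K. nbhd \<rho> t z)"
      using mball_subset_nbhd by (meson UN_mono order_refl)
    ultimately show "\<exists>Z. finite Z \<and> S \<subseteq> (\<Union>z\<in>Z. nbhd \<rho> t z)" by blast
  qed
qed

lemma mcomplete_if_pm_complete:
  assumes "pm_complete \<rho>"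
  shows "D.mcomplete"
  unfolding D.mcomplete_def
proof (intro allI impI)
  fix \<sigma> assume "D.MCauchy \<sigma>"
  have "pm_cauchy \<rho> \<sigma>" unfolding pm_cauchy_def
  proof (intro allI impI)
    fix t :: real assume "0 < t"
    then obtain N where "\<forall>m n. N \<le> m \<longrightarrow> N \<le> n \<longrightarrow> pm_dist (\<sigma> m) (\<sigma> n) < t"
      using \<open>D.MCauchy \<sigma>\<close> unfolding D.MCauchy_def by blast
    then have "\<forall>m\<ge>N. \<forall>n\<ge>N. 1 - t < \<rho> (\<sigma> m) (\<sigma> n) t"
      by (auto intro: pm_dist_less_imp)
    then show "\<exists>N. \<forall>m\<ge>N. \<forall>n\<ge>N. 1 - t < \<rho> (\<sigma> m) (\<sigma> n) t" ..
  qed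
  then obtain p where p: "pm_converges \<rho> \<sigma> p" using assms by (auto simp: pm_complete_def)
  have "\<forall>\<^sub>F n in sequentially. pm_dist (\<sigma> n) p < e" if "0 < e" for e
  proof -
    obtain N where "\<forall>n\<ge>N. 1 - e/2 < \<rho> p (\<sigma> n) (e/2)"
      using p \<open>0 < e\<close> unfolding pm_converges_def by (meson half_gt_zero)
    then have "pm_dist (\<sigma> n) p \<le> e/2" if "N \<le> n" for n
      using pm_dist_le[of "e/2" p "\<sigma> n"] pm_dist_commute[of p "\<sigma> n"] \<open>0 < e\<close> that by simp
    then have "pm_dist (\<sigma> n) p < e" if "N \<le> n" for n
      using that \<open>0 < e\<close> by fastforce
    then show ?thesis unfolding eventually_sequentially by blast
  qed
  then have "limitin D.mtopology \<sigma> p sequentially" by (simp add: D.limitin_metric)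
  then show "\<exists>x. limitin D.mtopology \<sigma> x sequentially" by blast
qed

lemma F_pt_set_bdd_above: "bdd_above ((\<lambda>q. \<rho> p q x) ` B)"
  by (rule bdd_aboveI[of _ 1]) (auto simp: rho_le_one)

lemma F_pt_set_ge: "q \<in> B \<Longrightarrow> \<rho> p q x \<le> F_pt_set \<rho> p B x"
  unfolding F_pt_set_def by (rule cSUP_upper[OF _ F_pt_set_bdd_above])

lemma F_pt_set_le_one: "B \<noteq> {} \<Longrightarrow> F_pt_set \<rho> p B x \<le> 1"
  unfolding F_pt_set_def by (rule cSUP_least) (auto simp: rho_le_one)

lemma F_pt_set_nonneg: "B \<noteq> {} \<Longrightarrow> 0 \<le> F_pt_set \<rho> p B x"
  using F_pt_set_ge rho_nonneg by (meson equals0I order_trans)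

lemma F_pt_set_gt_imp: "B \<noteq> {} \<Longrightarrow> c < F_pt_set \<rho> p B x \<Longrightarrow> \<exists>q\<in>B. c < \<rho> p q x"
  unfolding F_pt_set_def using less_cSUP_iff[OF _ F_pt_set_bdd_above] by blast

lemma Gamma_star_le:
  assumes "p \<in> A" "B \<noteq> {}"
  shows "Gamma_star \<rho> A B x \<le> F_pt_set \<rho> p B x"
  unfolding Gamma_star_def
proof (rule cINF_lower[OF _ assms(1)])
  show "bdd_below ((\<lambda>p. F_pt_set \<rho> p B x) ` A)"
    by (rule bdd_belowI[of _ 0]) (use F_pt_set_nonneg[OF assms(2)] in blast)
qed

lemma Gamma_star_le_one: "A \<noteq> {} \<Longrightarrow> B \<noteq> {} \<Longrightarrow> Gamma_star \<rho> A B x \<le> 1"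
  using Gamma_star_le F_pt_set_le_one by (meson equals0I order_trans)

lemma Gamma_star_ge:
  "A \<noteq> {} \<Longrightarrow> (\<And>p. p \<in> A \<Longrightarrow> c \<le> F_pt_set \<rho> p B x) \<Longrightarrow> c \<le> Gamma_star \<rho> A B x"
  unfolding Gamma_star_def by (rule cINF_greatest)

lemma Gamma_star_bdd_above:
  "A \<noteq> {} \<Longrightarrow> B \<noteq> {} \<Longrightarrow> bdd_above ((\<lambda>x'. Gamma_star \<rho> A B x') ` X)"
  by (rule bdd_aboveI[of _ 1]) (use Gamma_star_le_one in blast)

lemma F_star_gt_imp:
  assumes "A \<noteq> {}" "B \<noteq> {}" "1 - t < F_star \<rho> A B t" "p \<in> A"
  shows "\<exists>q\<in>B. 1 - t < \<rho> p q t"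
proof -
  have "{..<t} \<noteq> {}" by auto
  then obtain x' where x': "x' < t" "1 - t < Gamma_star \<rho> A B x'"
    using assms(3) less_cSUP_iff[OF _ Gamma_star_bdd_above[OF assms(1,2)]]
    unfolding F_star_def by auto
  then have "1 - t < F_pt_set \<rho> p B x'"
    using Gamma_star_le[OF assms(4,2), of x'] by linarith
  then obtain q where "q \<in> B" "1 - t < \<rho> p q x'" using F_pt_set_gt_imp assms(2) by blast
  moreover have "\<rho> p q x' \<le> \<rho> p q t" using x'(1) by (intro rho_mono) simp
  ultimately show ?thesis by force
qed

lemma F_star_gt_if:
  assumes "A \<noteq> {}" "B \<noteq> {}" "s < t" and near: "\<And>p. p \<in> A \<Longrightarrow> \<exists>q\<in>B. 1 - s < \<rho> p q s"
  shows "1 - t < F_star \<rho> A B t"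
proof -
  have "1 - s \<le> Gamma_star \<rho> A B s"
  proof (rule Gamma_star_ge[OF assms(1)])
    fix p assume "p \<in> A"
    then obtain q where "q \<in> B" "1 - s < \<rho> p q s" using near by blast
    then show "1 - s \<le> F_pt_set \<rho> p B s" using F_pt_set_ge[of q B p s] by linarith
  qed
  also have "\<dots> \<le> F_star \<rho> A B t"
    unfolding F_star_def
    by (rule cSUP_upper[OF _ Gamma_star_bdd_above[OF assms(1,2)]]) (use assms(3) in simp)
  finally show ?thesis using assms(3) by linarith
qed

lemma pm_H_gt_imp:
  assumes "A \<noteq> {}" "B \<noteq> {}" "1 - t < pm_H \<rho> A B t"
  shows "\<forall>p\<in>A. \<exists>q\<in>B. 1 - t < \<rho> p q t" "\<forall>q\<in>B. \<exists>p\<in>A. 1 - t < \<rho> q p t"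
  using F_star_gt_imp[OF assms(1,2)] F_star_gt_imp[OF assms(2,1)] assms(3)
  by (auto simp: pm_H_def)

lemma hausdorff_near_if_pm_H_gt:
  assumes "A \<noteq> {}" "B \<noteq> {}" "0 < t" "1 - t < pm_H \<rho> A B t"
  shows "hausdorff_near pm_dist A B (2*t)"
proof -
  have "pm_dist p q < 2*t" if "1 - t < \<rho> p q t" for p q
    using pm_dist_le[OF assms(3) that] assms(3) by linarith
  then show ?thesis
    using pm_H_gt_imp[OF assms(1,2,4)] unfolding hausdorff_near_def by blast
qed

lemma pm_H_gt_if_hausdorff_near:
  assumes "A \<noteq> {}" "B \<noteq> {}" "0 < t" "hausdorff_near pm_dist A B (t/2)"
  shows "1 - t < pm_H \<rho> A B t"
proof -
  have "t/2 < t" using assms(3) by simp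
  have AB: "\<exists>q\<in>B. 1 - t/2 < \<rho> p q (t/2)" if p: "p \<in> A" for p
  proof -
    obtain q where "q \<in> B" "pm_dist p q < t/2"
      using assms(4) p unfolding hausdorff_near_def by blast
    then show ?thesis using pm_dist_less_imp[of p q "t/2"] by blast
  qed
  have BA: "\<exists>p\<in>A. 1 - t/2 < \<rho> q p (t/2)" if q: "q \<in> B" for q
  proof -
    obtain p where "p \<in> A" "pm_dist q p < t/2"
      using assms(4) q unfolding hausdorff_near_def by blast
    then show ?thesis using pm_dist_less_imp[of q p "t/2"] by blast
  qed
  have "1 - t < F_star \<rho> A B t" by (rule F_star_gt_if[OF assms(1,2) \<open>t/2 < t\<close> AB])
  moreover have "1 - t < F_star \<rho> B A t" by (rule F_star_gt_if[OF assms(2,1) \<open>t/2 < t\<close> BA])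
  ultimately show ?thesis unfolding pm_H_def by simp
qed

lemma H_converges_iff_hausdorff_tendsto:
  assumes "\<And>n. As n \<noteq> {}" "A \<noteq> {}"
  shows "H_converges \<rho> As A \<longleftrightarrow> hausdorff_tendsto pm_dist As A"
proof
  assume conv: "H_converges \<rho> As A"
  show "hausdorff_tendsto pm_dist As A" unfolding hausdorff_tendsto_def
  proof (intro allI impI)
    fix e :: real assume "0 < e"
    then have "0 < e/2" by simp
    then obtain N where "\<forall>n\<ge>N. 1 - e/2 < pm_H \<rho> (As n) A (e/2)"
      using conv unfolding H_converges_def by blast
    then have "\<forall>n\<ge>N. hausdorff_near pm_dist (As n) A e"
      using hausdorff_near_if_pm_H_gt[OF assms(1) assms(2) \<open>0 < e/2\<close>] by simp
    then show "\<exists>N. \<forall>n\<ge>N. hausdorff_near pm_dist (As n) A e" ..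
  qed
next
  assume conv: "hausdorff_tendsto pm_dist As A"
  show "H_converges \<rho> As A" unfolding H_converges_def
  proof (intro allI impI)
    fix t :: real assume "0 < t"
    then have "0 < t/2" by simp
    then obtain N where "\<forall>n\<ge>N. hausdorff_near pm_dist (As n) A (t/2)"
      using conv unfolding hausdorff_tendsto_def by blast
    then have "\<forall>n\<ge>N. 1 - t < pm_H \<rho> (As n) A t"
      using pm_H_gt_if_hausdorff_near[OF assms(1) assms(2) \<open>0 < t\<close>] by simp
    then show "\<exists>N. \<forall>n\<ge>N. 1 - t < pm_H \<rho> (As n) A t" ..
  qed
qed

lemma hausdorff_cauchy_if_H_cauchy:
  assumes "\<And>n. As n \<noteq> {}" "H_cauchy \<rho> As"
  shows "hausdorff_cauchy pm_dist As"
  unfolding hausdorff_cauchy_def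
proof (intro allI impI)
  fix e :: real assume "0 < e"
  then have "0 < e/2" by simp
  then obtain N where "\<forall>m\<ge>N. \<forall>n\<ge>N. 1 - e/2 < pm_H \<rho> (As m) (As n) (e/2)"
    using assms(2) unfolding H_cauchy_def by blast
  then have "\<forall>m\<ge>N. \<forall>n\<ge>N. hausdorff_near pm_dist (As m) (As n) e"
    using hausdorff_near_if_pm_H_gt[OF assms(1) assms(1) \<open>0 < e/2\<close>] by simp
  then show "\<exists>N. \<forall>m\<ge>N. \<forall>n\<ge>N. hausdorff_near pm_dist (As m) (As n) e" ..
qed

lemma H_complete_Pf:
  assumes "pm_complete \<rho>" "\<And>n. As n \<in> Pf \<rho>" "H_cauchy \<rho> As"
  shows "\<exists>A\<in>Pf \<rho>. H_converges \<rho> As A"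
proof -
  have ne: "As n \<noteq> {}" for n using assms(2) by (simp add: Pf_def)
  obtain A where "A \<noteq> {}" "closedin D.mtopology A" "hausdorff_tendsto pm_dist As A"
    using D.mcomplete_hausdorff_limit[OF mcomplete_if_pm_complete[OF assms(1)] _ ne
        hausdorff_cauchy_if_H_cauchy[OF ne assms(3)]]
    by blast
  then show ?thesis
    using H_converges_iff_hausdorff_tendsto[OF ne] by (auto simp: Pf_def pm_closed_iff_closedin)
qed

lemma H_complete_if_H_closed_in_Pf:
  assumes "pm_complete \<rho>" "\<F> \<subseteq> Pf \<rho>" "H_closed_in_Pf \<rho> \<F>"
  shows "H_complete \<rho> \<F>"
  unfolding H_complete_def
proof (intro allI impI)
  fix As assume As: "(\<forall>n. As n \<in> \<F>) \<and> H_cauchy \<rho> As"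
  then obtain A where "A \<in> Pf \<rho>" "H_converges \<rho> As A"
    using H_complete_Pf[OF assms(1)] assms(2) by blast
  then show "\<exists>A\<in>\<F>. H_converges \<rho> As A"
    using assms(3) As unfolding H_closed_in_Pf_def by blast
qed

lemma Pk_eq_Pftb:
  assumes "pm_complete \<rho>"
  shows "Pk \<rho> = Pftb \<rho>"
proof -
  have "compactin D.mtopology K \<longleftrightarrow> closedin D.mtopology K \<and> D.mtotally_bounded K" for K
    using D.mtotally_bounded_eq_compact_closure_of[OF mcomplete_if_pm_complete[OF assms]]
      D.compactin_imp_mtotally_bounded compactin_imp_closedin[OF D.Hausdorff_space_mtopology]
    by (metis closure_of_eq)
  then show ?thesis
    by (auto simp: Pk_def Pftb_def pm_compact_iff_compactin pm_closed_iff_closedin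
        pm_totally_bounded_iff)
qed

lemma Phi_le:
  assumes "p \<in> A" "p' \<in> A"
  shows "Phi \<rho> A t \<le> \<rho> p p' t"
proof -
  have "Phi \<rho> A t \<le> \<rho> (fst (p, p')) (snd (p, p')) t"
    unfolding Phi_def
    by (rule cINF_lower) (use assms in \<open>auto intro: bdd_belowI[of _ 0] simp: rho_nonneg\<close>)
  then show ?thesis by simp
qed

lemma Phi_ge:
  "A \<noteq> {} \<Longrightarrow> (\<And>p p'. p \<in> A \<Longrightarrow> p' \<in> A \<Longrightarrow> c \<le> \<rho> p p' t) \<Longrightarrow> c \<le> Phi \<rho> A t"
  unfolding Phi_def by (rule cINF_greatest) auto

lemma Phi_le_one: "A \<noteq> {} \<Longrightarrow> Phi \<rho> A t \<le> 1"
  using Phi_le rho_le_one by (meson equals0I order_trans)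

lemma Phi_mono:
  assumes "A \<noteq> {}" "t \<le> T"
  shows "Phi \<rho> A t \<le> Phi \<rho> A T"
  by (rule Phi_ge[OF assms(1)]) (meson Phi_le assms(2) order_trans rho_mono)

lemma pm_bounded_iff:
  assumes "A \<noteq> {}"
  shows "pm_bounded \<rho> A \<longleftrightarrow> (\<forall>e>0. \<exists>t>0. 1 - e < Phi \<rho> A t)"
proof -
  let ?S = "SUP t\<in>{0<..}. Phi \<rho> A t"
  have bdd: "bdd_above ((\<lambda>t. Phi \<rho> A t) ` {0<..})"
    by (rule bdd_aboveI[of _ 1]) (use Phi_le_one[OF assms] in blast)
  have le: "?S \<le> 1"
    by (rule cSUP_least) (auto simp: Phi_le_one[OF assms])
  have gt_iff: "c < ?S \<longleftrightarrow> (\<exists>t>0. c < Phi \<rho> A t)" for c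
    using less_cSUP_iff[of "{0<..}", OF _ bdd, of c] by (simp add: Bex_def)
  show ?thesis
  proof (intro iffI allI impI)
    fix e :: real assume "pm_bounded \<rho> A" "0 < e"
    then have "1 - e < ?S" by (simp add: pm_bounded_def)
    then show "\<exists>t>0. 1 - e < Phi \<rho> A t" using gt_iff by blast
  next
    assume H: "\<forall>e>0. \<exists>t>0. 1 - e < Phi \<rho> A t"
    have "1 \<le> ?S"
    proof (rule field_le_epsilon)
      fix e :: real assume "0 < e"
      then have "1 - e < ?S" using H gt_iff by blast
      then show "1 \<le> ?S + e" by linarith
    qed
    then show "pm_bounded \<rho> A" using le by (simp add: pm_bounded_def)
  qed
qed

lemma Phi_ge_if_pm_H_gt:
  assumes "A \<noteq> {}" "B \<noteq> {}" "0 < e" "1 - e < pm_H \<rho> B A e" "0 < t" "1 - e < Phi \<rho> B t"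
  shows "1 - 3*e \<le> Phi \<rho> A (max t e)"
proof (rule Phi_ge[OF assms(1)])
  define T where "T = max t e"
  have "0 < T" "t \<le> T" "e \<le> T" using assms(5) by (auto simp: T_def)
  have close: "\<exists>q\<in>B. 1 - e < \<rho> p q e" if "p \<in> A" for p
    using pm_H_gt_imp(2)[OF assms(2,1,4)] that by blast
  fix p p' assume "p \<in> A" "p' \<in> A"
  then obtain q q' where q: "q \<in> B" "1 - e < \<rho> p q e" and q': "q' \<in> B" "1 - e < \<rho> p' q' e"
    using close by meson
  have "1 - e < \<rho> p q T" using q(2) rho_mono[OF \<open>e \<le> T\<close>, of p q] by linarith
  moreover have "1 - e < \<rho> q q' T"
    using assms(6) Phi_mono[OF assms(2) \<open>t \<le> T\<close>] Phi_le[OF q(1) q'(1), of T] by linarith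
  moreover have "1 - e < \<rho> q' p' T"
    using q'(2) rho_mono[OF \<open>e \<le> T\<close>, of p' q'] rho_commute[of p' q'] by simp
  moreover have "\<rho> p q T + \<rho> q q' T - 1 \<le> \<rho> p q' T" "\<rho> p q' T + \<rho> q' p' T - 1 \<le> \<rho> p p' T"
    using rho_triangle_W[OF \<open>0 < T\<close>] by blast+
  ultimately show "1 - 3*e \<le> \<rho> p p' (max t e)" unfolding T_def by linarith
qed

lemma H_closed_in_Pf_Pfb: "H_closed_in_Pf \<rho> (Pfb \<rho>)"
  unfolding H_closed_in_Pf_def
proof (intro allI impI, elim conjE)
  fix As A assume As: "\<forall>n. As n \<in> Pfb \<rho>" and A: "A \<in> Pf \<rho>" and conv: "H_converges \<rho> As A"
  have "A \<noteq> {}" "As n \<noteq> {}" "pm_bounded \<rho> (As n)" for n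
    using A As by (auto simp: Pf_def Pfb_def)
  have "\<exists>T>0. 1 - e < Phi \<rho> A T" if "0 < e" for e
  proof -
    have "0 < e/4" using that by simp
    then obtain N where N: "1 - e/4 < pm_H \<rho> (As N) A (e/4)"
      using conv unfolding H_converges_def by blast
    obtain t where "0 < t" "1 - e/4 < Phi \<rho> (As N) t"
      using \<open>pm_bounded \<rho> (As N)\<close> \<open>0 < e/4\<close> pm_bounded_iff[OF \<open>As N \<noteq> {}\<close>] by blast
    then have "1 - 3*(e/4) \<le> Phi \<rho> A (max t (e/4))"
      using Phi_ge_if_pm_H_gt[OF \<open>A \<noteq> {}\<close> \<open>As N \<noteq> {}\<close> \<open>0 < e/4\<close> N] by blast
    then show ?thesis using \<open>0 < t\<close> that by (intro exI[of _ "max t (e/4)"]) auto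
  qed
  then show "A \<in> Pfb \<rho>" using A pm_bounded_iff[OF \<open>A \<noteq> {}\<close>] by (simp add: Pf_def Pfb_def)
qed

lemma H_closed_in_Pf_Pftb: "H_closed_in_Pf \<rho> (Pftb \<rho>)"
  unfolding H_closed_in_Pf_def
proof (intro allI impI, elim conjE)
  fix As A assume As: "\<forall>n. As n \<in> Pftb \<rho>" and A: "A \<in> Pf \<rho>" and conv: "H_converges \<rho> As A"
  have "A \<noteq> {}" "As n \<noteq> {}" for n using A As by (auto simp: Pf_def Pftb_def)
  have "\<exists>Z. finite Z \<and> A \<subseteq> (\<Union>z\<in>Z. nbhd \<rho> t z)" if "0 < t" for t
  proof -
    have "0 < t/2" using that by simp
    then obtain N where "1 - t/2 < pm_H \<rho> (As N) A (t/2)"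
      using conv unfolding H_converges_def by blast
    then have close: "\<forall>p\<in>A. \<exists>q\<in>As N. 1 - t/2 < \<rho> p q (t/2)"
      using pm_H_gt_imp(2)[OF \<open>As N \<noteq> {}\<close> \<open>A \<noteq> {}\<close>] by blast
    obtain Z where Z: "finite Z" "As N \<subseteq> (\<Union>z\<in>Z. nbhd \<rho> (t/2) z)"
      using As \<open>0 < t/2\<close> unfolding Pftb_def pm_totally_bounded_def by blast
    have "p \<in> (\<Union>z\<in>Z. nbhd \<rho> t z)" if "p \<in> A" for p
    proof -
      obtain q where q: "q \<in> As N" "1 - t/2 < \<rho> p q (t/2)" using close \<open>p \<in> A\<close> by blast
      then obtain z where z: "z \<in> Z" "1 - t/2 < \<rho> z q (t/2)" using Z by (auto simp: nbhd_def)
      have "\<rho> z q (t/2) \<le> \<rho> z q t" "\<rho> p q (t/2) \<le> \<rho> p q t" using \<open>0 < t\<close> by (auto intro: rho_mono)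
      moreover have "\<rho> z q t + \<rho> q p t - 1 \<le> \<rho> z p t" using rho_triangle_W[OF \<open>0 < t\<close>] by blast
      moreover have "\<rho> q p t = \<rho> p q t" using rho_commute[of q p] by simp
      ultimately have "1 - t < \<rho> z p t" using q z by linarith
      then show ?thesis using z by (auto simp: nbhd_def)
    qed
    then show ?thesis using Z(1) by blast
  qed
  then show "A \<in> Pftb \<rho>" using A by (simp add: Pf_def Pftb_def pm_totally_bounded_def)
qed

end

theorem theorem4p5:
  fixes \<rho> :: "'a \<Rightarrow> 'a \<Rightarrow> real \<Rightarrow> real"
    and \<tau> :: "(real \<Rightarrow> real) \<Rightarrow> (real \<Rightarrow> real) \<Rightarrow> (real \<Rightarrow> real)"
  assumes "pm_space \<rho> \<tau>"
    and "tf_sup_continuous \<tau>"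
    and "condition_W \<tau>"
  shows "H_closed_in_Pf \<rho> (Pfb \<rho>) \<and> H_closed_in_Pf \<rho> (Pftb \<rho>) \<and>
         (pm_complete \<rho> \<longrightarrow> H_complete \<rho> (Pfb \<rho>) \<and> H_complete \<rho> (Pk \<rho>))"
proof -
  interpret pm_space_W \<rho> \<tau> using assms(1,3) by unfold_locales
  have "Pfb \<rho> \<subseteq> Pf \<rho>" "Pftb \<rho> \<subseteq> Pf \<rho>" by (auto simp: Pf_def Pfb_def Pftb_def)
  then have "H_complete \<rho> (Pfb \<rho>) \<and> H_complete \<rho> (Pk \<rho>)" if "pm_complete \<rho>"
    using H_complete_if_H_closed_in_Pf[OF that] H_closed_in_Pf_Pfb H_closed_in_Pf_Pftb
      Pk_eq_Pftb[OF that] by simp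
  then show ?thesis using H_closed_in_Pf_Pfb H_closed_in_Pf_Pftb by blast
qed

end
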